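(* Let $\lambda\in\mathbb C\setminus(\mathbb Z\setminus\{0\})$, with notation as in the context, and let $\Omega=2YX+\frac12H^2+H$ act on $\mathfrak{gl}(\lambda)$ via the adjoint action of $\mathfrak{sl}(2)\subset\mathfrak{gl}(\lambda)$. (i) $\Omega$ is self-adjoint with respect to $\langle u,v\rangle=\mathrm{tr}(uv)$, and for $k\in\mathbb Z_{\ge0}$, $l\in\mathbb Z$, $|l|\le k$, the element $e_{kl}=(\mathrm{ad}\,Y)^{k-l}(X^k)$ (equal to $X^lf_{kl}(H)$ for $l\ge0$) is an eigenvector of $\Omega$ with eigenvalue $2k(k+1)$. For $0\le l\le k$ the polynomials $f_{kl}$ satisfy $$T_0(H)\nabla\triangle(f)-(l+1)(H+l)\triangle(f)+(k-l)(k+l+1)f=0,$$ and $f_{kl}=\dfrac{\nabla^{k-l}(T_1\cdots T_k)}{T_1\cdots T_l}$ if $l>0$, $f_{k0}=\nabla^k(T_1\cdots T_k)$. (ii) For $0\le l\le k$, $\langle f_{kl},f_{kl}\rangle_l:=\mathrm{tr}\big(f_{kl}(H)^2T_1(H)\cdots T_l(H)\big)$ equals $\dfrac{(k-l)!}{(k+l)!}\dfrac{(k!)^2}{2k+1}\lambda(\lambda^2-1^2)\cdots(\lambda^2-k^2)$ if $\lambda\neq0$, and $(-1)^k\dfrac{(k-l)!}{(k+l)!}\dfrac{(k!)^4}{2k+1}$ if $\lambda=0$.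
   Context: $\mathfrak{sl}(2)$ has basis $X,H,Y$ with $[X,Y]=H$, $[H,X]=2X$, $[H,Y]=-2Y$. $\mathfrak A_\lambda=U(\mathfrak{sl}(2))/I_\lambda$, $I_\lambda$ the two-sided ideal generated by $\Omega-\frac12(\lambda^2-1)$; in $\mathfrak A_\lambda$, $XY=\frac14(\lambda^2-(H-1)^2)$. $\mathfrak{gl}(\lambda)$ is $\mathfrak A_\lambda$ with bracket $[a,b]=ab-ba$; the subalgebra generated by $H$ is $\mathbb C[H]$, and for $l>0$ each element of $H$-weight $2l$ is uniquely $X^lf(H)$, $f\in\mathbb C[H]$. The trace $\mathrm{tr}$ is the linear functional with $\mathrm{tr}(ab)=\mathrm{tr}(ba)$, vanishing on elements of nonzero $H$-weight, with $\sum_{m\ge0}\mathrm{tr}(H^m)\frac{t^m}{m!}=\frac{e^{\lambda t}-e^{-\lambda t}}{e^t-e^{-t}}$ for $\lambda\ne0$ and $\frac{2t}{e^t-e^{-t}}$ for $\lambda=0$. For $0\le l\le k$, $f_{kl}\in\mathbb C[H]$ is defined by $(\mathrm{ad}\,Y)^{k-l}(X^k)=X^lf_{kl}(H)$. $T_i(H)=\frac14(\lambda^2-(H+2i-1)^2)$ for $i\ge0$, empty products $=1$; $\triangle f(H)=f(H+2)-f(H)$, $\nabla f(H)=f(H)-f(H-2)$. *)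

theory Defs
  imports "HOL-Computational_Algebra.Polynomial" "HOL-Computational_Algebra.Formal_Power_Series"
begin

text \<open>Concrete model of the algebra A_lam = U(sl2)/I_lam.  An element is a finitely
supported function  a :: int => complex poly ; it stands for
  sum_{n>0} X^n (a n)(H) + (a 0)(H) + sum_{n<0} Y^(-n) (a n)(H).
Multiplication is determined by  f(H) X = X f(H+2),  f(H) Y = Y f(H-2),
X Y = T_0(H),  Y X = T_1(H)  (which encode [X,Y]=H, [H,X]=2X, [H,Y]=-2Y and
Omega = 1/2 (lam^2 - 1)).\<close>

definition shp :: "complex \<Rightarrow> complex poly \<Rightarrow> complex poly" where
  "shp c f = pcompose f [:c, 1:]"

definition Hpoly :: "complex poly" where
  "Hpoly = [:0, 1:]"

definition Tp :: "complex \<Rightarrow> int \<Rightarrow> complex poly" where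
  "Tp lam i = smult (1/4) ([:lam^2:] - [:of_int (2*i - 1), 1:]^2)"

definition delta_op :: "complex poly \<Rightarrow> complex poly" where
  "delta_op f = shp 2 f - f"

definition nabla_op :: "complex poly \<Rightarrow> complex poly" where
  "nabla_op f = f - shp (-2) f"

text \<open>e_i(1) e_j(1) = e_{i+j}(wcoef lam i j), where e_n(f) = X^n f(H) (n >= 0),
 e_n(f) = Y^(-n) f(H) (n < 0).  Uses X^b Y^b = prod_{s<b} T_0(H-2s) = prod_{s<b} T_{-s}(H)
 and Y^b X^b = prod_{s<b} T_1(H+2s) = prod_{s<b} T_{s+1}(H).\<close>
definition wcoef :: "complex \<Rightarrow> int \<Rightarrow> int \<Rightarrow> complex poly" where
  "wcoef lam i j =
     (if i > 0 \<and> j < 0 then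
        shp (2 * of_int (min 0 (i + j))) (\<Prod>s<nat (min i (-j)). Tp lam (- int s))
      else if i < 0 \<and> j > 0 then
        shp (2 * of_int (max 0 (i + j))) (\<Prod>s<nat (min (-i) j). Tp lam (int s + 1))
      else 1)"

type_synonym gl_elt = "int \<Rightarrow> complex poly"

definition gl_supp :: "gl_elt \<Rightarrow> int set" where
  "gl_supp a = {n. a n \<noteq> 0}"

definition gl_carrier :: "gl_elt set" where
  "gl_carrier = {a. finite (gl_supp a)}"

definition gl_zero :: gl_elt where
  "gl_zero = (\<lambda>n. 0)"

definition gl_add :: "gl_elt \<Rightarrow> gl_elt \<Rightarrow> gl_elt" where
  "gl_add a b = (\<lambda>n. a n + b n)"

definition gl_diff :: "gl_elt \<Rightarrow> gl_elt \<Rightarrow> gl_elt" where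
  "gl_diff a b = (\<lambda>n. a n - b n)"

definition gl_scale :: "complex \<Rightarrow> gl_elt \<Rightarrow> gl_elt" where
  "gl_scale c a = (\<lambda>n. smult c (a n))"

definition gl_mono :: "int \<Rightarrow> complex poly \<Rightarrow> gl_elt" where
  "gl_mono n f = (\<lambda>m. if m = n then f else 0)"

definition gl_mult :: "complex \<Rightarrow> gl_elt \<Rightarrow> gl_elt \<Rightarrow> gl_elt" where
  "gl_mult lam a b = (\<lambda>n. \<Sum>i\<in>gl_supp a. \<Sum>j\<in>gl_supp b.
      if i + j = n then wcoef lam i j * shp (2 * of_int j) (a i) * b j else 0)"

definition gl_X :: gl_elt where "gl_X = gl_mono 1 1"
definition gl_Y :: gl_elt where "gl_Y = gl_mono (-1) 1"
definition gl_H :: gl_elt where "gl_H = gl_mono 0 Hpoly"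

definition gl_br :: "complex \<Rightarrow> gl_elt \<Rightarrow> gl_elt \<Rightarrow> gl_elt" where
  "gl_br lam a b = gl_diff (gl_mult lam a b) (gl_mult lam b a)"

definition Omega_ad :: "complex \<Rightarrow> gl_elt \<Rightarrow> gl_elt" where
  "Omega_ad lam u =
     gl_add (gl_add (gl_scale 2 (gl_br lam gl_Y (gl_br lam gl_X u)))
                    (gl_scale (1/2) (gl_br lam gl_H (gl_br lam gl_H u))))
            (gl_br lam gl_H u)"

text \<open>Trace: generating function of tr(H^m)\<close>
definition tr_gen :: "complex \<Rightarrow> complex fps" where
  "tr_gen lam = (if lam \<noteq> 0
      then (fps_exp lam - fps_exp (- lam)) div (fps_exp 1 - fps_exp (- 1))
      else (2 * fps_X) div (fps_exp 1 - fps_exp (- 1)))"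

definition trH :: "complex \<Rightarrow> nat \<Rightarrow> complex" where
  "trH lam m = fact m * fps_nth (tr_gen lam) m"

definition tr_poly :: "complex \<Rightarrow> complex poly \<Rightarrow> complex" where
  "tr_poly lam p = (\<Sum>m\<le>degree p. coeff p m * trH lam m)"

definition gl_tr :: "complex \<Rightarrow> gl_elt \<Rightarrow> complex" where
  "gl_tr lam a = tr_poly lam (a 0)"

definition ekl :: "complex \<Rightarrow> nat \<Rightarrow> int \<Rightarrow> gl_elt" where
  "ekl lam k l = ((gl_br lam gl_Y) ^^ nat (int k - l)) (gl_mono (int k) 1)"

text \<open>f_{kl}: the polynomial with e_{kl} = X^l f_{kl}(H), 0 <= l <= k\<close>
definition fkl :: "complex \<Rightarrow> nat \<Rightarrow> nat \<Rightarrow> complex poly" where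
  "fkl lam k l = ekl lam k (int l) (int l)"

end

theory Submission
  imports Defs
begin

text \<open>All computations are done one \<open>H\<close>-weight at a time: an element of weight \<open>m\<close> is
  \<open>e\<^sub>m(f) = X\<^sup>m f(H)\<close> (or \<open>Y\<^sup>-\<^sup>m f(H)\<close>), and \<open>ad Y\<close>, \<open>ad X\<close> and \<open>\<Omega>\<close> act on \<open>f\<close> by difference
  operators in \<open>H\<close>. Since \<open>\<Omega>\<close> commutes with \<open>ad Y\<close>, every \<open>e\<^sub>k\<^sub>l = (ad Y)\<^sup>k\<^sup>-\<^sup>l X\<^sup>k\<close> inherits
  the eigenvalue \<open>2k(k+1)\<close> of the highest weight vector \<open>X\<^sup>k\<close>.

  The trace obeys a discrete Stokes formula: \<open>tr(P(H) - P(H-2))\<close> only depends on \<open>P\<close> at the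
  points \<open>H = \<plusminus>lam - 1\<close>, which is read off the generating function of \<open>tr(H\<^sup>m)\<close>. As \<open>YX = T\<^sub>1(H)\<close>
  vanishes there, the trace is cyclic in the needed cases, so \<open>ad X\<close> and \<open>ad Y\<close> are skew-adjoint
  for \<open>tr(uv)\<close> and \<open>\<Omega>\<close> is self-adjoint. Skew-adjointness also turns the norms of
  \<open>f\<^sub>k\<^sub>l\<close> into a recursion in \<open>l\<close> which ends at \<open>tr(T\<^sub>1 \<cdots> T\<^sub>k)\<close>; the latter is evaluated like
  a Beta integral by repeated summation by parts. The norms do not vanish for
  \<open>lam \<notin> \<int> - {0}\<close>, and hence neither do the \<open>e\<^sub>k\<^sub>l\<close>.\<close>

lemma poly_shp [simp]: "poly (shp c p) x = poly p (x + c)"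
  by (simp add: shp_def poly_pcompose add.commute)

lemma shp_shp [simp]: "shp a (shp b p) = shp (a + b) p"
  by (rule poly_ext) (simp add: algebra_simps)

lemma shp_0 [simp]: "shp 0 p = p"
  by (simp add: shp_def)

lemma shp_add [simp]: "shp c (p + q) = shp c p + shp c q"
  by (simp add: shp_def pcompose_add)

lemma shp_diff [simp]: "shp c (p - q) = shp c p - shp c q"
  by (simp add: shp_def pcompose_diff)

lemma shp_uminus [simp]: "shp c (- p) = - shp c p"
  by (simp add: shp_def pcompose_uminus)

lemma shp_mult [simp]: "shp c (p * q) = shp c p * shp c q"
  by (simp add: shp_def pcompose_mult)

lemma shp_smult [simp]: "shp c (smult a p) = smult a (shp c p)"
  by (simp add: shp_def pcompose_smult)

lemma shp_const [simp]: "shp c [:a:] = [:a:]"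
  by (simp add: shp_def)

lemma shp_1 [simp]: "shp c 1 = 1"
  by (simp add: shp_def pcompose_1)

lemma shp_prod: "shp c (\<Prod>i\<in>S. f i) = (\<Prod>i\<in>S. shp c (f i))"
  by (simp add: shp_def pcompose_prod)

lemma shp_eq_0_iff [simp]: "shp c p = 0 \<longleftrightarrow> p = 0"
  by (metis add.right_inverse shp_0 shp_shp shp_const pCons_0_0)

lemma pderiv_shp: "pderiv (shp c p) = shp c (pderiv p)"
  by (simp add: shp_def pderiv_pcompose pderiv_pCons)

lemma shp_eq_sum_powers: "shp c r = (\<Sum>i\<le>degree r. smult (coeff r i) ([:c, 1:] ^ i))"
  by (rule poly_ext) (simp add: poly_sum poly_altdef[of r] add.commute)

lemma poly_Tp [simp]: "poly (Tp lam i) x = (lam^2 - (x + of_int (2*i - 1))^2) / 4"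
  by (simp add: Tp_def power2_eq_square algebra_simps)

lemma shp_Tp [simp]: "shp (2 * of_int j) (Tp lam i) = Tp lam (i + j)"
  by (rule poly_ext) (simp add: algebra_simps)

lemma shp_Tp_minus_2 [simp]: "shp (-2) (Tp lam i) = Tp lam (i - 1)"
  using shp_Tp[of "-1"] by simp

lemma shp_Tp_of_nat [simp]:
  "shp (of_nat p * 2) (Tp lam i) = Tp lam (i + int p)"
  "shp (- (of_nat p * 2)) (Tp lam i) = Tp lam (i - int p)"
  "shp (2 * of_nat p) (Tp lam i) = Tp lam (i + int p)"
  "shp (- (2 * of_nat p)) (Tp lam i) = Tp lam (i - int p)"
  by (rule poly_ext; simp add: algebra_simps)+

lemma poly_pderiv_Tp: "poly (pderiv (Tp lam i)) x = - (x + of_int (2*i - 1)) / 2"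
  by (simp add: Tp_def pderiv_pCons pderiv_smult pderiv_diff pderiv_power_Suc power2_eq_square
      pderiv_mult algebra_simps)

lemma tr_poly_eq_sum_lessThan:
  assumes "degree p < N"
  shows "tr_poly lam p = (\<Sum>m<N. coeff p m * trH lam m)"
proof -
  have "tr_poly lam p = (\<Sum>m\<in>{..degree p}. coeff p m * trH lam m)" by (simp add: tr_poly_def)
  also have "\<dots> = (\<Sum>m<N. coeff p m * trH lam m)"
    by (rule sum.mono_neutral_left) (use assms in \<open>auto simp: coeff_eq_0\<close>)
  finally show ?thesis .
qed

lemma tr_poly_add: "tr_poly lam (p + q) = tr_poly lam p + tr_poly lam q"
proof -
  define N where "N = Suc (max (degree p) (degree q))"
  have "degree (p+q) < N" unfolding N_def using degree_add_le_max[of p q] by linarith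
  then show ?thesis
    by (simp add: tr_poly_eq_sum_lessThan[of p N] tr_poly_eq_sum_lessThan[of q N]
        tr_poly_eq_sum_lessThan[of "p + q" N] N_def sum.distrib algebra_simps)
qed

lemma tr_poly_smult: "tr_poly lam (smult c p) = c * tr_poly lam p"
proof -
  have "degree (smult c p) < Suc (degree p)" by (simp add: le_imp_less_Suc)
  then show ?thesis
    by (simp add: tr_poly_eq_sum_lessThan[of p "Suc (degree p)"]
        tr_poly_eq_sum_lessThan[of "smult c p" "Suc (degree p)"] sum_distrib_left algebra_simps)
qed

lemma tr_poly_0[simp]: "tr_poly lam 0 = 0"
  by (simp add: tr_poly_def)

lemma tr_poly_uminus: "tr_poly lam (- p) = - tr_poly lam p"
  using tr_poly_smult[of lam "-1" p] by simp

lemma tr_poly_diff: "tr_poly lam (p - q) = tr_poly lam p - tr_poly lam q"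
  using tr_poly_add[of lam p "-q"] tr_poly_uminus[of lam q] by simp

lemma tr_poly_sum: "tr_poly lam (\<Sum>i\<in>S. f i) = (\<Sum>i\<in>S. tr_poly lam (f i))"
  by (induction S rule: infinite_finite_induct) (auto simp: tr_poly_add)

lemma fps_exp_diff_nth: "fps_nth (fps_exp (1::complex) - fps_exp (-1)) j = (1 - (-1)^j) / fact j"
  by (simp add: diff_divide_distrib power_one)

lemma fps_exp_diff_neq_0: "fps_exp (1::complex) - fps_exp (-1) \<noteq> 0"
proof
  assume "fps_exp (1::complex) - fps_exp (-1) = 0"
  then have "fps_nth (fps_exp (1::complex) - fps_exp (-1)) 1 = 0" by simp
  then show False by (simp add: fps_exp_diff_nth)
qed

lemma subdegree_fps_exp_diff: "subdegree (fps_exp (1::complex) - fps_exp (-1)) = 1"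
  by (rule subdegreeI) (auto simp: fps_exp_diff_nth)

text \<open>Multiplying the generating function of \<open>tr(H^m)\<close> by \<open>e^t - e^(-t)\<close> yields that of
  \<open>tr((H+1)^n - (H-1)^n)\<close>; the binomial sum below is the latter expanded.\<close>

lemma trH_binomial_sum:
  assumes "tr_gen lam * (fps_exp 1 - fps_exp (-1)) = F"
  shows "(\<Sum>m\<le>n. of_nat (n choose m) * (1 - (-1)^(n-m)) * trH lam m) = fact n * fps_nth F n"
proof -
  have "fps_nth F n = (\<Sum>i=0..n. fps_nth (tr_gen lam) i * ((1 - (-1)^(n-i)) / fact (n-i)))"
    using assms[symmetric] by (simp add: fps_mult_nth fps_exp_diff_nth diff_divide_distrib)
  then have "fact n * fps_nth F n = (\<Sum>i=0..n. fact n * (fps_nth (tr_gen lam) i * ((1 - (-1)^(n-i)) / fact (n-i))))"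
    by (simp add: sum_distrib_left)
  also have "\<dots> = (\<Sum>m\<le>n. of_nat (n choose m) * (1 - (-1)^(n-m)) * trH lam m)"
    unfolding atLeast0AtMost
  proof (rule sum.cong[OF refl])
    fix m assume "m \<in> {..n}"
    then have mn: "m \<le> n" by simp
    show "fact n * (fps_nth (tr_gen lam) m * ((1 - (-1) ^ (n - m)) / fact (n - m))) =
          of_nat (n choose m) * (1 - (-1) ^ (n - m)) * trH lam m"
      unfolding binomial_fact[OF mn] trH_def
      by (simp add: field_simps)
  qed
  finally show ?thesis by simp
qed

lemma trH_binomial_sum_nonzero:
  assumes "lam \<noteq> 0"
  shows "(\<Sum>m\<le>n. of_nat (n choose m) * (1 - (-1)^(n-m)) * trH lam m) = lam^n - (-lam)^n"
proof -
  let ?f = "fps_exp lam - fps_exp (-lam)"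
  have f1: "fps_nth ?f 1 = 2 * lam" by simp
  have fne: "?f \<noteq> 0" using f1 assms by (metis fps_zero_nth mult_eq_0_iff zero_neq_numeral)
  have "subdegree ?f \<ge> 1" by (rule subdegree_geI[OF fne]) auto
  then have "tr_gen lam * (fps_exp 1 - fps_exp (-1)) = ?f"
    using assms subdegree_fps_exp_diff fps_exp_diff_neq_0 by (simp add: tr_gen_def fps_times_divide_eq)
  from trH_binomial_sum[OF this, of n] show ?thesis
    by (simp add: right_diff_distrib)
qed

lemma trH_binomial_sum_zero:
  "(\<Sum>m\<le>n. of_nat (n choose m) * (1 - (-1)^(n-m)) * trH 0 m) = (if n = 1 then 2 else 0)"
proof -
  have "tr_gen 0 * (fps_exp 1 - fps_exp (-1)) = 2 * fps_X"
    using subdegree_fps_exp_diff fps_exp_diff_neq_0 by (simp add: tr_gen_def fps_times_divide_eq)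
  from trH_binomial_sum[OF this, of n] show ?thesis
    by (cases "n = 1") (auto simp: numeral_fps_const)
qed

lemma tr_poly_power_difference:
  "tr_poly lam ([:1,1:]^n - [:-1,1:]^n) =
     (if lam \<noteq> 0 then lam^n - (-lam)^n else if n = 1 then 2 else 0)"
proof -
  have dd: "degree ([:c::complex,1:]^n) \<le> n" for c
    using degree_power_le[of "[:c,1:]" n] by simp
  have d: "degree ([:1::complex,1:]^n - [:-1,1:]^n) < Suc n"
    using degree_diff_le[OF dd dd] by (simp add: le_imp_less_Suc)
  have "tr_poly lam ([:1,1:]^n - [:-1,1:]^n) =
      (\<Sum>m\<le>n. of_nat (n choose m) * (1 - (-1)^(n-m)) * trH lam m)"
    unfolding tr_poly_eq_sum_lessThan[OF d] lessThan_Suc_atMost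
    by (rule sum.cong) (auto simp: coeff_linear_poly_power algebra_simps)
  then show ?thesis
    using trH_binomial_sum_nonzero trH_binomial_sum_zero by simp
qed

lemma tr_poly_central_difference:
  "tr_poly lam (shp 1 r - shp (-1) r) =
     (if lam \<noteq> 0 then poly r lam - poly r (-lam) else 2 * coeff r 1)"
proof -
  have "shp 1 r - shp (-1) r = (\<Sum>i\<le>degree r. smult (coeff r i) ([:1, 1:] ^ i - [:-1,1:]^i))"
    by (simp add: shp_eq_sum_powers sum_subtractf smult_diff_right)
  then have tr: "tr_poly lam (shp 1 r - shp (-1) r) =
     (\<Sum>i\<le>degree r. coeff r i * tr_poly lam ([:1,1:]^i - [:-1,1:]^i))"
    by (simp add: tr_poly_sum tr_poly_smult)
  show ?thesis
  proof (cases "lam = 0")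
    case True
    have "(\<Sum>i\<le>degree r. coeff r i * tr_poly lam ([:1,1:]^i - [:-1,1:]^i))
        = (\<Sum>i\<le>degree r. if i = 1 then 2 * coeff r 1 else 0)"
      using True by (intro sum.cong) (simp_all add: tr_poly_power_difference)
    then show ?thesis
      unfolding tr using True by (auto simp: sum.delta coeff_eq_0)
  next
    case False
    then show ?thesis
      by (simp add: tr tr_poly_power_difference poly_altdef sum_subtractf right_diff_distrib)
  qed
qed

definition boundary_term :: "complex \<Rightarrow> complex poly \<Rightarrow> complex" where
  "boundary_term lam P =
     (if lam \<noteq> 0 then poly P (lam - 1) - poly P (- lam - 1) else 2 * poly (pderiv P) (-1))"

lemma tr_poly_backward_difference: "tr_poly lam (P - shp (-2) P) = boundary_term lam P"
proof -
  define r where "r = shp (-1) P"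
  have "coeff r 1 = poly (pderiv r) 0"
    by (simp add: coeff_pderiv poly_0_coeff_0)
  also have "\<dots> = poly (pderiv P) (-1)"
    by (simp add: r_def pderiv_shp)
  finally show ?thesis
    using tr_poly_central_difference[of lam r] by (simp add: r_def boundary_term_def)
qed

text \<open>\<open>T\<^sub>1\<close> vanishes at both boundary points \<open>\<plusminus>lam - 1\<close> (doubly so if \<open>lam = 0\<close>).\<close>

lemma boundary_term_T1_mult: "boundary_term lam (Tp lam 1 * p) = 0"
proof (cases "lam = 0")
  case True
  have "poly (pderiv (Tp lam 1 * p)) (-1) = 0"
    using True by (simp add: pderiv_shp pderiv_mult poly_pderiv_Tp)
  then show ?thesis using True by (simp add: boundary_term_def)
next
  case False
  then show ?thesis by (simp add: boundary_term_def algebra_simps power2_eq_square)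
qed

text \<open>Cyclicity \<open>tr(Y \<cdot> X p(H)) = tr(X p(H) \<cdot> Y)\<close>, as \<open>YX = T\<^sub>1(H)\<close> and \<open>XY = T\<^sub>0(H)\<close>.\<close>

lemma tr_poly_T1_shift: "tr_poly lam (Tp lam 1 * shp 2 p) = tr_poly lam (Tp lam 0 * p)"
  using tr_poly_backward_difference[of lam "Tp lam 1 * shp 2 p"]
  by (simp add: boundary_term_T1_mult tr_poly_diff)

lemma tr_poly_cyclic_cancel:
  assumes "P1 + P2 = Tp lam 1 * shp 2 R - Tp lam 0 * R"
  shows "tr_poly lam P1 = - tr_poly lam P2"
  using tr_poly_T1_shift[of lam R] tr_poly_add[of lam P1 P2] assms
  by (simp add: tr_poly_diff eq_neg_iff_add_eq_0)

lemma wcoef_minus_one_left: "wcoef lam (-1) m = (if m > 0 then Tp lam m else 1)"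
proof (cases "m > 0")
  case True
  then have "min 1 m = 1" "max 0 (-1 + m) = m - 1" by auto
  moreover have "shp (2 * of_int (m - 1)) (Tp lam 1) = Tp lam m" by (simp only: shp_Tp) simp
  ultimately show ?thesis using True by (simp add: wcoef_def del: shp_Tp)
qed (simp add: wcoef_def)

lemma wcoef_minus_one_right: "wcoef lam m (-1) = (if m > 0 then Tp lam 0 else 1)"
proof (cases "m > 0")
  case True
  then have "min m 1 = 1" "min 0 (m - 1) = 0" by auto
  then show ?thesis using True by (simp add: wcoef_def)
qed (simp add: wcoef_def)

lemma wcoef_one_left: "wcoef lam 1 m = (if m < 0 then Tp lam (m + 1) else 1)"
proof (cases "m < 0")
  case True
  then have "min 1 (-m) = 1" "min 0 (1 + m) = m + 1" by auto
  moreover have "shp (2 * of_int (m + 1)) (Tp lam 0) = Tp lam (m + 1)" by (simp only: shp_Tp) simp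
  ultimately show ?thesis using True by (simp add: wcoef_def add.commute del: shp_Tp)
qed (simp add: wcoef_def)

lemma wcoef_one_right: "wcoef lam m 1 = (if m < 0 then Tp lam 1 else 1)"
proof (cases "m < 0")
  case True
  then have "min (-m) 1 = 1" "max 0 (m + 1) = 0" by auto
  then show ?thesis using True by (simp add: wcoef_def)
qed (simp add: wcoef_def)

lemma wcoef_0_left [simp]: "wcoef lam 0 j = 1"
  by (simp add: wcoef_def)

lemma wcoef_0_right [simp]: "wcoef lam i 0 = 1"
  by (simp add: wcoef_def)

lemma gl_supp_mono: "gl_supp (gl_mono n f) = (if f = 0 then {} else {n})"
  by (auto simp: gl_supp_def gl_mono_def)

lemma gl_mono_in_carrier[simp]: "gl_mono n f \<in> gl_carrier"
  by (simp add: gl_carrier_def gl_supp_mono)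

lemma gl_mono_same[simp]: "gl_mono n f n = f"
  by (simp add: gl_mono_def)

lemma finite_gl_supp: "a \<in> gl_carrier \<Longrightarrow> finite (gl_supp a)"
  by (simp add: gl_carrier_def)

lemma gl_mult_mono_left:
  assumes "b \<in> gl_carrier"
  shows "gl_mult lam (gl_mono i f) b n = wcoef lam i (n - i) * shp (2 * of_int (n - i)) f * b (n - i)"
proof (cases "f = 0")
  case True then show ?thesis by (simp add: gl_mult_def gl_supp_mono)
next
  case False
  have fin: "finite (gl_supp b)" using assms finite_gl_supp by blast
  have "gl_mult lam (gl_mono i f) b n =
     (\<Sum>j\<in>gl_supp b. if i + j = n then wcoef lam i j * shp (2 * of_int j) f * b j else 0)"
    using False unfolding gl_mult_def by (subst gl_supp_mono) (simp cong: if_cong)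
  also have "\<dots> =
     (\<Sum>j\<in>gl_supp b. if j = n - i then wcoef lam i j * shp (2 * of_int j) f * b j else 0)"
    by (rule sum.cong) auto
  also have "\<dots> = wcoef lam i (n - i) * shp (2 * of_int (n - i)) f * b (n - i)"
    using fin by (simp add: sum.delta gl_supp_def)
  finally show ?thesis .
qed

lemma gl_mult_mono_right:
  assumes "a \<in> gl_carrier"
  shows "gl_mult lam a (gl_mono j g) n = wcoef lam (n - j) j * shp (2 * of_int j) (a (n - j)) * g"
proof (cases "g = 0")
  case True then show ?thesis by (simp add: gl_mult_def gl_supp_mono)
next
  case False
  have fin: "finite (gl_supp a)" using assms finite_gl_supp by blast
  have "gl_mult lam a (gl_mono j g) n =
     (\<Sum>i\<in>gl_supp a. if i + j = n then wcoef lam i j * shp (2 * of_int j) (a i) * g else 0)"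
    using False unfolding gl_mult_def by (subst gl_supp_mono) (simp cong: if_cong)
  also have "\<dots> =
     (\<Sum>i\<in>gl_supp a. if i = n - j then wcoef lam i j * shp (2 * of_int j) (a i) * g else 0)"
    by (rule sum.cong) auto
  also have "\<dots> = wcoef lam (n - j) j * shp (2 * of_int j) (a (n - j)) * g"
    using fin by (simp add: sum.delta gl_supp_def)
  finally show ?thesis .
qed

text \<open>With \<open>e\<^sub>m(f)\<close> as in \<^const>\<open>wcoef\<close>, \<open>[Y, e\<^sub>m(f)] = e\<^sub>m\<^sub>-\<^sub>1(adY_coeff lam m f)\<close>,
  \<open>[X, e\<^sub>m(f)] = e\<^sub>m\<^sub>+\<^sub>1(adX_coeff lam m f)\<close> and \<open>\<Omega>(e\<^sub>m(f)) = e\<^sub>m(Omega_coeff lam m f)\<close>.\<close>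

definition adY_coeff :: "complex \<Rightarrow> int \<Rightarrow> complex poly \<Rightarrow> complex poly" where
  "adY_coeff lam m f = wcoef lam (-1) m * f - wcoef lam m (-1) * shp (-2) f"

definition adX_coeff :: "complex \<Rightarrow> int \<Rightarrow> complex poly \<Rightarrow> complex poly" where
  "adX_coeff lam m f = wcoef lam 1 m * f - wcoef lam m 1 * shp 2 f"

definition Omega_coeff :: "complex \<Rightarrow> int \<Rightarrow> complex poly \<Rightarrow> complex poly" where
  "Omega_coeff lam n f = smult 2 (adY_coeff lam (n + 1) (adX_coeff lam n f))
      + smult (1/2) (smult (2 * of_int n) (smult (2 * of_int n) f)) + smult (2 * of_int n) f"

lemma adY_coeff_eq: "adY_coeff lam m f = (if m > 0 then Tp lam m * f - Tp lam 0 * shp (-2) f else f - shp (-2) f)"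
  by (simp add: adY_coeff_def wcoef_minus_one_left wcoef_minus_one_right)

lemma adX_coeff_eq: "adX_coeff lam m f = (if m < 0 then Tp lam (m + 1) * f - Tp lam 1 * shp 2 f else f - shp 2 f)"
  by (simp add: adX_coeff_def wcoef_one_left wcoef_one_right)

lemma adY_coeff_0[simp]: "adY_coeff lam m 0 = 0" by (simp add: adY_coeff_def)

lemma adX_coeff_0[simp]: "adX_coeff lam m 0 = 0" by (simp add: adX_coeff_def)

lemma gl_carrier_shiftI:
  assumes "a \<in> gl_carrier" "\<And>m. F m 0 = 0"
  shows "(\<lambda>n. F n (a (n + c))) \<in> gl_carrier"
proof -
  have "gl_supp (\<lambda>n. F n (a (n + c))) \<subseteq> (\<lambda>m. m - c) ` gl_supp a"
  proof
    fix n assume "n \<in> gl_supp (\<lambda>n. F n (a (n + c)))"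
    then have "a (n + c) \<noteq> 0" using assms(2) by (auto simp: gl_supp_def)
    then show "n \<in> (\<lambda>m. m - c) ` gl_supp a"
      by (auto simp: gl_supp_def image_iff intro!: bexI[of _ "n + c"])
  qed
  moreover have "finite ((\<lambda>m. m - c) ` gl_supp a)" using assms(1) finite_gl_supp by blast
  ultimately show ?thesis unfolding gl_carrier_def by (blast intro: finite_subset)
qed

lemma gl_br_Y:
  assumes "a \<in> gl_carrier"
  shows "gl_br lam gl_Y a = (\<lambda>n. adY_coeff lam (n + 1) (a (n + 1)))"
proof
  fix n
  show "gl_br lam gl_Y a n = adY_coeff lam (n + 1) (a (n + 1))"
    using assms unfolding gl_br_def gl_diff_def gl_Y_def
    by (simp add: gl_mult_mono_left gl_mult_mono_right adY_coeff_def mult.commute)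
qed

lemma gl_br_X:
  assumes "a \<in> gl_carrier"
  shows "gl_br lam gl_X a = (\<lambda>n. adX_coeff lam (n - 1) (a (n - 1)))"
proof
  fix n
  show "gl_br lam gl_X a n = adX_coeff lam (n - 1) (a (n - 1))"
    using assms unfolding gl_br_def gl_diff_def gl_X_def
    by (simp add: gl_mult_mono_left gl_mult_mono_right adX_coeff_def mult.commute)
qed

lemma gl_br_H:
  assumes "a \<in> gl_carrier"
  shows "gl_br lam gl_H a = (\<lambda>n. smult (2 * of_int n) (a n))"
proof
  fix n
  have "shp (2 * of_int n) Hpoly * a n - a n * Hpoly = smult (2 * of_int n) (a n)"
    by (rule poly_ext) (simp add: Hpoly_def algebra_simps)
  then show "gl_br lam gl_H a n = smult (2 * of_int n) (a n)"
    using assms unfolding gl_br_def gl_diff_def gl_H_def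
    by (simp add: gl_mult_mono_left gl_mult_mono_right)
qed

lemma gl_br_X_in_carrier: "a \<in> gl_carrier \<Longrightarrow> gl_br lam gl_X a \<in> gl_carrier"
  using gl_carrier_shiftI[of a "\<lambda>n. adX_coeff lam (n - 1)" "-1"] by (simp add: gl_br_X)

lemma gl_br_H_in_carrier: "a \<in> gl_carrier \<Longrightarrow> gl_br lam gl_H a \<in> gl_carrier"
  using gl_carrier_shiftI[of a "\<lambda>n. smult (2 * of_int n)" 0] by (simp add: gl_br_H)

lemma Omega_ad_eq:
  assumes "u \<in> gl_carrier"
  shows "Omega_ad lam u = (\<lambda>n. Omega_coeff lam n (u n))"
proof -
  have c1: "gl_br lam gl_X u \<in> gl_carrier" "gl_br lam gl_H u \<in> gl_carrier"
    using assms gl_br_X_in_carrier gl_br_H_in_carrier by blast+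
  show ?thesis
    unfolding Omega_ad_def gl_add_def gl_scale_def Omega_coeff_def
    using assms c1 by (simp add: gl_br_Y gl_br_X gl_br_H)
qed

lemma Omega_ad_in_carrier: "u \<in> gl_carrier \<Longrightarrow> Omega_ad lam u \<in> gl_carrier"
  using gl_carrier_shiftI[of u "\<lambda>n. Omega_coeff lam n" 0] by (simp add: Omega_ad_eq Omega_coeff_def)

lemma gl_br_Y_mono: "gl_br lam gl_Y (gl_mono m f) = gl_mono (m - 1) (adY_coeff lam m f)"
  unfolding gl_br_Y[OF gl_mono_in_carrier] by (auto simp: gl_mono_def fun_eq_iff)

lemma Omega_ad_mono: "Omega_ad lam (gl_mono m f) = gl_mono m (Omega_coeff lam m f)"
  unfolding Omega_ad_eq[OF gl_mono_in_carrier] by (auto simp: gl_mono_def fun_eq_iff Omega_coeff_def)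

lemma gl_scale_mono: "gl_scale c (gl_mono m f) = gl_mono m (smult c f)"
  by (rule ext) (simp add: gl_scale_def gl_mono_def)

lemma adY_coeff_add: "adY_coeff lam m (f + g) = adY_coeff lam m f + adY_coeff lam m g"
  by (simp add: adY_coeff_def algebra_simps)

lemma adY_coeff_smult: "adY_coeff lam m (smult c f) = smult c (adY_coeff lam m f)"
  by (rule poly_ext) (simp add: adY_coeff_def algebra_simps)

lemma adX_adY_coeff_commutator:
  "adX_coeff lam (n - 1) (adY_coeff lam n g) - adY_coeff lam (n + 1) (adX_coeff lam n g) =
     smult (2 * of_int n) g"
proof (rule poly_ext)
  fix x
  consider "n > 0" | "n = 0" | "n < 0" by linarith
  then show "poly (adX_coeff lam (n - 1) (adY_coeff lam n g) - adY_coeff lam (n + 1) (adX_coeff lam n g)) x =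
        poly (smult (2 * of_int n) g) x"
    by cases (simp add: adY_coeff_eq adX_coeff_eq, simp add: field_simps power2_eq_square)+
qed

lemma Omega_coeff_adY_coeff:
  "Omega_coeff lam (n - 1) (adY_coeff lam n g) = adY_coeff lam n (Omega_coeff lam n g)"
proof -
  have commute: "adX_coeff lam (n - 1) (adY_coeff lam n g) =
      adY_coeff lam (n + 1) (adX_coeff lam n g) + smult (2 * of_int n) g"
    using adX_adY_coeff_commutator[of lam n g] by (simp add: algebra_simps)
  show ?thesis
    unfolding Omega_coeff_def commute adY_coeff_add adY_coeff_smult
    by (rule poly_ext) (simp add: algebra_simps)
qed

fun adY_iter :: "complex \<Rightarrow> nat \<Rightarrow> nat \<Rightarrow> complex poly" where
  "adY_iter lam k 0 = 1"
| "adY_iter lam k (Suc j) = adY_coeff lam (int k - int j) (adY_iter lam k j)"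

lemma gl_br_Y_iter_mono:
  "((gl_br lam gl_Y) ^^ j) (gl_mono (int k) 1) = gl_mono (int k - int j) (adY_iter lam k j)"
  by (induction j) (simp_all add: gl_br_Y_mono algebra_simps)

lemma Omega_coeff_adY_iter:
  "Omega_coeff lam (int k - int j) (adY_iter lam k j) =
     smult (2 * of_nat k * (of_nat k + 1)) (adY_iter lam k j)"
proof (induction j)
  case 0
  show ?case by (simp add: Omega_coeff_def adX_coeff_eq algebra_simps)
next
  case (Suc j)
  have "Omega_coeff lam (int k - int (Suc j)) (adY_iter lam k (Suc j)) =
      Omega_coeff lam ((int k - int j) - 1) (adY_coeff lam (int k - int j) (adY_iter lam k j))"
    by (simp add: algebra_simps)
  also have "\<dots> = adY_coeff lam (int k - int j) (Omega_coeff lam (int k - int j) (adY_iter lam k j))"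
    by (rule Omega_coeff_adY_coeff)
  also have "\<dots> = smult (2 * of_nat k * (of_nat k + 1)) (adY_iter lam k (Suc j))"
    by (simp add: Suc.IH adY_coeff_smult)
  finally show ?case .
qed

definition Tprod :: "complex \<Rightarrow> int \<Rightarrow> nat \<Rightarrow> complex poly" where
  "Tprod lam a n = (\<Prod>s<n. Tp lam (a + int s))"

lemma Tprod_0 [simp]: "Tprod lam a 0 = 1"
  by (simp add: Tprod_def)

lemma Tprod_Suc_left: "Tprod lam a (Suc n) = Tp lam a * Tprod lam (a + 1) n"
  by (simp only: Tprod_def prod.lessThan_Suc_shift) (simp add: algebra_simps)

lemma Tprod_Suc_right: "Tprod lam a (Suc n) = Tprod lam a n * Tp lam (a + int n)"
  by (simp add: Tprod_def)

lemma Tprod_swap: "Tprod lam a n * Tp lam (a + int n) = Tp lam a * Tprod lam (a + 1) n"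
  using Tprod_Suc_left[of lam a n] Tprod_Suc_right[of lam a n] by simp

lemma shp_Tprod: "shp (2 * of_int j) (Tprod lam a n) = Tprod lam (a + j) n"
  unfolding Tprod_def shp_prod shp_Tp by (simp add: algebra_simps)

lemma shp_Tprod_2 [simp]: "shp 2 (Tprod lam a n) = Tprod lam (a + 1) n"
  using shp_Tprod[of 1 lam a n] by simp

lemma shp_Tprod_minus_2 [simp]: "shp (-2) (Tprod lam a n) = Tprod lam (a - 1) n"
  using shp_Tprod[of "-1" lam a n] by simp

lemma prod_Tp_eq_Tprod: "(\<Prod>i\<in>{1..l}. Tp lam (int i)) = Tprod lam 1 l"
  by (induction l) (simp_all add: atLeastAtMostSuc_conv Tprod_Suc_right algebra_simps)

lemma wcoef_opposite:
  "wcoef lam i (- i) =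
     (if i > 0 then Tprod lam (1 - i) (nat i) else if i < 0 then Tprod lam 1 (nat (- i)) else 1)"
proof -
  have neg: "(\<Prod>s<n. Tp lam (- int s)) = Tprod lam (1 - int n) n" for n
    by (induction n) (simp_all add: Tprod_Suc_left algebra_simps)
  have pos: "(\<Prod>s<n. Tp lam (int s + 1)) = Tprod lam 1 n" for n
    by (simp add: Tprod_def algebra_simps)
  show ?thesis
    using neg[of "nat i"] pos[of "nat (- i)"] by (simp add: wcoef_def)
qed

text \<open>\<open>tr_pairing lam i f g = tr(e\<^sub>i(f) e\<^sub>-\<^sub>i(g))\<close>.\<close>

definition tr_pairing :: "complex \<Rightarrow> int \<Rightarrow> complex poly \<Rightarrow> complex poly \<Rightarrow> complex" where
  "tr_pairing lam i f g = tr_poly lam (wcoef lam i (- i) * shp (2 * of_int (- i)) f * g)"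

lemma tr_pairing_add_left: "tr_pairing lam i (f1 + f2) g = tr_pairing lam i f1 g + tr_pairing lam i f2 g"
  by (simp add: tr_pairing_def algebra_simps tr_poly_add)

lemma tr_pairing_add_right: "tr_pairing lam i f (g1 + g2) = tr_pairing lam i f g1 + tr_pairing lam i f g2"
  by (simp add: tr_pairing_def algebra_simps tr_poly_add)

lemma tr_pairing_smult_left: "tr_pairing lam i (smult c f) g = c * tr_pairing lam i f g"
  by (simp add: tr_pairing_def tr_poly_smult[symmetric])

lemma tr_pairing_smult_right: "tr_pairing lam i f (smult c g) = c * tr_pairing lam i f g"
  by (simp add: tr_pairing_def tr_poly_smult[symmetric])

lemma gl_tr_mult_eq_sum_tr_pairing:
  assumes "u \<in> gl_carrier" "v \<in> gl_carrier" "finite S" "gl_supp u \<subseteq> S"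
  shows "gl_tr lam (gl_mult lam u v) = (\<Sum>i\<in>S. tr_pairing lam i (u i) (v (- i)))"
proof -
  let ?t = "\<lambda>i. wcoef lam i (- i) * shp (2 * of_int (- i)) (u i) * v (- i)"
  have fv: "finite (gl_supp v)" using assms(2) finite_gl_supp by blast
  have "gl_mult lam u v 0 = (\<Sum>i\<in>gl_supp u. ?t i)"
    unfolding gl_mult_def
  proof (rule sum.cong[OF refl])
    fix i
    have "(\<Sum>j\<in>gl_supp v. if i + j = 0 then wcoef lam i j * shp (2 * of_int j) (u i) * v j else 0)
        = (\<Sum>j\<in>gl_supp v. if j = - i then wcoef lam i j * shp (2 * of_int j) (u i) * v j else 0)"
      by (rule sum.cong) auto
    also have "\<dots> = ?t i"
      using fv by (simp add: sum.delta gl_supp_def)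
    finally show "(\<Sum>j\<in>gl_supp v. if i + j = 0 then wcoef lam i j * shp (2 * of_int j) (u i) * v j else 0)
        = ?t i" .
  qed
  also have "\<dots> = (\<Sum>i\<in>S. ?t i)"
    by (rule sum.mono_neutral_left) (use assms in \<open>auto simp: gl_supp_def\<close>)
  finally show ?thesis by (simp add: gl_tr_def tr_poly_sum tr_pairing_def)
qed

text \<open>Skew-adjointness of \<open>ad X\<close> and \<open>ad Y\<close> for the trace form \<open>tr(uv)\<close>, split by the sign of the
  weights.\<close>

lemma tr_pairing_ad_nonneg:
  "tr_pairing lam (int p) (adY_coeff lam (int p + 1) f) g =
     - tr_pairing lam (int p + 1) f (adY_coeff lam (- int p) g)"
  "tr_pairing lam (int p + 1) (adX_coeff lam (int p) f) g =
     - tr_pairing lam (int p) f (adX_coeff lam (- int p - 1) g)"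
proof -
  have w1: "wcoef lam (int p) (- int p) = Tprod lam (1 - int p) p"
    using wcoef_opposite[of lam "int p"] by (cases "p = 0") simp_all
  have w2: "wcoef lam (int p + 1) (- (int p + 1)) = Tprod lam (- int p) p * Tp lam 0"
    using wcoef_opposite[of lam "int p + 1"] by (simp add: Tprod_Suc_right nat_add_distrib algebra_simps)
  have sw: "Tp lam 0 * Tprod lam (- int p) p = Tp lam (- int p) * Tprod lam (1 - int p) p"
    using Tprod_swap[of lam "- int p" p] by (simp add: algebra_simps)
  define F where "F = shp (- 2 * of_nat p - 2) f"
  have f: "f = shp (2 * of_nat p + 2) F" by (simp add: F_def)
  show "tr_pairing lam (int p) (adY_coeff lam (int p + 1) f) g =
     - tr_pairing lam (int p + 1) f (adY_coeff lam (- int p) g)"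
    unfolding tr_pairing_def w1 w2 f
    by (rule tr_poly_cyclic_cancel[where R = "Tprod lam (- int p) p * F * shp (-2) g"])
      (simp add: adY_coeff_eq, use sw in \<open>simp add: algebra_simps\<close>)
  show "tr_pairing lam (int p + 1) (adX_coeff lam (int p) f) g =
     - tr_pairing lam (int p) f (adX_coeff lam (- int p - 1) g)"
    unfolding tr_pairing_def w1 w2 f
    by (rule tr_poly_cyclic_cancel[where R = "- (Tprod lam (- int p) p * F * g)"])
      (simp add: adX_coeff_eq, use sw in \<open>simp add: algebra_simps\<close>)
qed

lemma tr_pairing_ad_neg:
  "tr_pairing lam (- int q - 1) (adY_coeff lam (- int q) f) g =
     - tr_pairing lam (- int q) f (adY_coeff lam (int q + 1) g)"
  "tr_pairing lam (- int q) (adX_coeff lam (- int q - 1) f) g =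
     - tr_pairing lam (- int q - 1) f (adX_coeff lam (int q) g)"
proof -
  have w1: "wcoef lam (- int q) (- (- int q)) = Tprod lam 1 q"
    using wcoef_opposite[of lam "- int q"] by (cases "q = 0") simp_all
  have w2: "wcoef lam (- int q - 1) (- (- int q - 1)) = Tprod lam 1 q * Tp lam (int q + 1)"
    using wcoef_opposite[of lam "- int q - 1"] by (simp add: Tprod_Suc_right nat_add_distrib algebra_simps)
  have sw: "Tp lam 1 * Tprod lam 2 q = Tprod lam 1 q * Tp lam (int q + 1)"
    using Tprod_swap[of lam 1 q] by (simp add: algebra_simps)
  define F where "F = shp (2 * of_nat q) f"
  have f: "f = shp (- 2 * of_nat q) F" by (simp add: F_def)
  show "tr_pairing lam (- int q - 1) (adY_coeff lam (- int q) f) g =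
     - tr_pairing lam (- int q) f (adY_coeff lam (int q + 1) g)"
    unfolding tr_pairing_def w1 w2 f
    by (rule tr_poly_cyclic_cancel[where R = "Tprod lam 1 q * F * shp (-2) g"])
      (simp add: adY_coeff_eq, use sw in \<open>simp add: algebra_simps\<close>)
  show "tr_pairing lam (- int q) (adX_coeff lam (- int q - 1) f) g =
     - tr_pairing lam (- int q - 1) f (adX_coeff lam (int q) g)"
    unfolding tr_pairing_def w1 w2 f
    by (rule tr_poly_cyclic_cancel[where R = "- (Tprod lam 1 q * F * g)"])
      (simp add: adX_coeff_eq, use sw in \<open>simp add: algebra_simps\<close>)
qed

lemma tr_pairing_adY:
  "tr_pairing lam (m - 1) (adY_coeff lam m f) g = - tr_pairing lam m f (adY_coeff lam (1 - m) g)"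
proof (cases "m \<ge> 1")
  case True
  then obtain p where m: "m = int p + 1" by (intro that[of "nat (m - 1)"]) simp
  show ?thesis unfolding m using tr_pairing_ad_nonneg(1)[of lam p f g] by simp
next
  case False
  then obtain q where m: "m = - int q" by (intro that[of "nat (- m)"]) simp
  show ?thesis unfolding m using tr_pairing_ad_neg(1)[of lam q f g] by (simp add: algebra_simps)
qed

lemma tr_pairing_adX:
  "tr_pairing lam (m + 1) (adX_coeff lam m f) g = - tr_pairing lam m f (adX_coeff lam (- m - 1) g)"
proof (cases "m \<ge> 0")
  case True
  then obtain p where m: "m = int p" by (intro that[of "nat m"]) simp
  show ?thesis unfolding m using tr_pairing_ad_nonneg(2)[of lam p f g] by simp
next
  case False
  then obtain q where m: "m = - int q - 1" by (intro that[of "nat (- m - 1)"]) simp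
  show ?thesis unfolding m using tr_pairing_ad_neg(2)[of lam q f g] by (simp add: algebra_simps)
qed

lemma tr_pairing_Omega_coeff:
  "tr_pairing lam i (Omega_coeff lam i f) g = tr_pairing lam i f (Omega_coeff lam (- i) g)"
proof -
  have Y: "tr_pairing lam i (adY_coeff lam (i + 1) (adX_coeff lam i f)) g =
      - tr_pairing lam (i + 1) (adX_coeff lam i f) (adY_coeff lam (- i) g)"
    using tr_pairing_adY[of lam "i + 1" "adX_coeff lam i f" g] by simp
  have X: "tr_pairing lam (i + 1) (adX_coeff lam i f) (adY_coeff lam (- i) g) =
      - tr_pairing lam i f (adX_coeff lam (- i - 1) (adY_coeff lam (- i) g))"
    using tr_pairing_adX[of lam i f "adY_coeff lam (- i) g"] by simp
  have commute: "adX_coeff lam (- i - 1) (adY_coeff lam (- i) g) =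
      adY_coeff lam (- i + 1) (adX_coeff lam (- i) g) + smult (2 * of_int (- i)) g"
    using adX_adY_coeff_commutator[of lam "- i" g] by (simp add: algebra_simps)
  show ?thesis
    unfolding Omega_coeff_def tr_pairing_add_left tr_pairing_add_right tr_pairing_smult_left
      tr_pairing_smult_right Y X commute
    by (simp add: algebra_simps)
qed

lemma Omega_ad_self_adjoint:
  assumes "u \<in> gl_carrier" "v \<in> gl_carrier"
  shows "gl_tr lam (gl_mult lam (Omega_ad lam u) v) = gl_tr lam (gl_mult lam u (Omega_ad lam v))"
proof -
  let ?S = "gl_supp u"
  have fin: "finite ?S" using assms finite_gl_supp by blast
  have sub: "gl_supp (Omega_ad lam u) \<subseteq> ?S"
    using assms(1) by (auto simp: gl_supp_def Omega_ad_eq Omega_coeff_def)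
  have "gl_tr lam (gl_mult lam (Omega_ad lam u) v) = (\<Sum>i\<in>?S. tr_pairing lam i (Omega_ad lam u i) (v (- i)))"
    by (rule gl_tr_mult_eq_sum_tr_pairing[OF Omega_ad_in_carrier[OF assms(1)] assms(2) fin sub])
  also have "\<dots> = (\<Sum>i\<in>?S. tr_pairing lam i (u i) (Omega_ad lam v (- i)))"
    using assms by (simp add: Omega_ad_eq tr_pairing_Omega_coeff)
  also have "\<dots> = gl_tr lam (gl_mult lam u (Omega_ad lam v))"
    by (rule gl_tr_mult_eq_sum_tr_pairing[symmetric, OF assms(1) Omega_ad_in_carrier[OF assms(2)] fin order_refl])
  finally show ?thesis .
qed

lemma ekl_eq_gl_mono:
  assumes "\<bar>l\<bar> \<le> int k"
  shows "ekl lam k l = gl_mono l (adY_iter lam k (nat (int k - l)))"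
proof -
  have "int k - int (nat (int k - l)) = l" using assms by simp
  then show ?thesis by (simp add: ekl_def gl_br_Y_iter_mono)
qed

lemma Omega_ad_ekl:
  assumes "\<bar>l\<bar> \<le> int k"
  shows "Omega_ad lam (ekl lam k l) = gl_scale (2 * of_nat k * (of_nat k + 1)) (ekl lam k l)"
proof -
  have "int k - int (nat (int k - l)) = l" using assms by simp
  then show ?thesis
    using Omega_coeff_adY_iter[of lam k "nat (int k - l)"]
    by (simp add: ekl_eq_gl_mono[OF assms] Omega_ad_mono gl_scale_mono)
qed

lemma fkl_eq_adY_iter:
  assumes "l \<le> k"
  shows "fkl lam k l = adY_iter lam k (k - l)"
  using assms by (simp add: fkl_def ekl_eq_gl_mono nat_diff_distrib)

lemma ekl_eq_gl_mono_fkl: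
  assumes "l \<le> k"
  shows "ekl lam k (int l) = gl_mono (int l) (fkl lam k l)"
  using assms by (simp add: fkl_eq_adY_iter ekl_eq_gl_mono nat_diff_distrib)

text \<open>The eigenvalue equation of \<^const>\<open>Omega_coeff\<close> at weight \<open>l\<close>, multiplied by \<open>-1/2\<close>.\<close>

lemma fkl_difference_equation:
  assumes "l \<le> k"
  shows "Tp lam 0 * nabla_op (delta_op (fkl lam k l))
          - smult (of_nat (l + 1)) ([:of_nat l, 1:] * delta_op (fkl lam k l))
          + smult (of_nat ((k - l) * (k + l + 1))) (fkl lam k l) = 0"
proof -
  let ?f = "fkl lam k l"
  have eigen: "Omega_coeff lam (int l) ?f = smult (2 * of_nat k * (of_nat k + 1)) ?f"
    using Omega_coeff_adY_iter[of lam k "k - l"] assms by (simp add: fkl_eq_adY_iter)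
  have "Tp lam 0 * nabla_op (delta_op ?f)
          - smult (of_nat (l + 1)) ([:of_nat l, 1:] * delta_op ?f)
          + smult (of_nat ((k - l) * (k + l + 1))) ?f
        = smult (-1/2) (Omega_coeff lam (int l) ?f - smult (2 * of_nat k * (of_nat k + 1)) ?f)"
  proof (rule poly_ext)
    fix x
    have kl: "of_nat ((k - l) * (k + l + 1)) = (of_nat k - of_nat l) * (of_nat k + of_nat l + (1::complex))"
      by (simp only: of_nat_mult of_nat_diff[OF assms] of_nat_add of_nat_1)
    show "poly (Tp lam 0 * nabla_op (delta_op ?f)
          - smult (of_nat (l + 1)) ([:of_nat l, 1:] * delta_op ?f)
          + smult (of_nat ((k - l) * (k + l + 1))) ?f) x
        = poly (smult (-1/2) (Omega_coeff lam (int l) ?f - smult (2 * of_nat k * (of_nat k + 1)) ?f)) x"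
      unfolding kl
      by (simp add: nabla_op_def delta_op_def Omega_coeff_def adY_coeff_eq adX_coeff_eq)
         (simp add: field_simps power2_eq_square)
  qed
  then show ?thesis using eigen by simp
qed

lemma adY_iter_mult_Tprod:
  assumes "j \<le> k"
  shows "adY_iter lam k j * Tprod lam 1 (k - j) = (nabla_op ^^ j) (Tprod lam 1 k)"
  using assms
proof (induction j)
  case (Suc j)
  define l where "l = k - Suc j"
  have kj: "k - j = Suc l" using Suc.prems by (simp add: l_def)
  have ij: "int k - int j = int l + 1" using Suc.prems by (simp add: l_def)
  have "(nabla_op ^^ Suc j) (Tprod lam 1 k) = nabla_op (adY_iter lam k j * Tprod lam 1 (Suc l))"
    using Suc by (simp add: kj)
  also have "\<dots> = adY_iter lam k (Suc j) * Tprod lam 1 l"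
    unfolding nabla_op_def using Tprod_swap[of lam 0 l]
    by (simp add: ij adY_coeff_eq Tprod_Suc_right Tprod_Suc_left algebra_simps)
  finally show ?case by (simp add: l_def)
qed simp

lemma fkl_mult_prod_Tp:
  assumes "l \<le> k"
  shows "fkl lam k l * (\<Prod>i\<in>{1..l}. Tp lam (int i))
           = (nabla_op ^^ (k - l)) (\<Prod>i\<in>{1..k}. Tp lam (int i))"
  unfolding prod_Tp_eq_Tprod fkl_eq_adY_iter[OF assms]
  using adY_iter_mult_Tprod[of "k - l" k lam] assms by simp

lemma tr_poly_adY_coeff_adjoint:
  "tr_poly lam (adY_coeff lam (int p + 1) f * g * Tprod lam 1 p) =
     tr_poly lam (f * adX_coeff lam (int p) g * Tprod lam 1 (Suc p))"
proof -
  have "tr_poly lam (adY_coeff lam (int p + 1) f * g * Tprod lam 1 p) =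
      - tr_poly lam (- (f * adX_coeff lam (int p) g * Tprod lam 1 (Suc p)))"
    by (rule tr_poly_cyclic_cancel[where R = "shp (-2) f * g * Tprod lam 1 p"])
      (simp add: adY_coeff_eq adX_coeff_eq Tprod_Suc_right,
       use Tprod_swap[of lam 1 p] in \<open>simp add: algebra_simps\<close>)
  then show ?thesis by (simp add: tr_poly_uminus)
qed

text \<open>\<open>adY_iter_norm lam k j = \<langle>f\<^sub>k\<^sub>l, f\<^sub>k\<^sub>l\<rangle>\<^sub>l\<close> for \<open>l = k - j\<close>.\<close>

definition adY_iter_norm :: "complex \<Rightarrow> nat \<Rightarrow> nat \<Rightarrow> complex" where
  "adY_iter_norm lam k j = tr_poly lam (adY_iter lam k j ^ 2 * Tprod lam 1 (k - j))"

text \<open>On the \<open>\<Omega>\<close>-eigenvector \<open>f\<close> of weight \<open>l = k - j\<close>, \<open>ad X ad Y\<close> acts as the scalar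
  \<open>k(k+1) - l(l-1) = (j+1)(2k-j)\<close>.\<close>

lemma adY_iter_norm_Suc:
  assumes "j < k"
  shows "adY_iter_norm lam k (Suc j) = of_nat ((j + 1) * (2 * k - j)) * adY_iter_norm lam k j"
proof -
  define p where "p = k - Suc j"
  have kj: "k - j = Suc p" "k - Suc j = p" using assms by (simp_all add: p_def)
  have ij: "int k - int j = int p + 1" using assms by (simp add: p_def)
  define f where "f = adY_iter lam k j"
  define f' where "f' = adY_iter lam k (Suc j)"
  have f': "f' = adY_coeff lam (int p + 1) f" by (simp add: f'_def f_def ij)
  have eigen: "Omega_coeff lam (int p + 1) f = smult (2 * of_nat k * (of_nat k + 1)) f"
    using Omega_coeff_adY_iter[of lam k j] by (simp add: f_def ij)
  have YX: "adY_coeff lam (int p + 2) (adX_coeff lam (int p + 1) f) =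
     smult (of_nat k * (of_nat k + 1) - (of_nat p + 1)^2 - (of_nat p + 1)) f"
  proof (rule poly_ext)
    fix x
    have "2 * poly (adY_coeff lam (int p + 2) (adX_coeff lam (int p + 1) f)) x =
      2 * poly (smult (of_nat k * (of_nat k + 1) - (of_nat p + 1)^2 - (of_nat p + 1)) f) x"
      using arg_cong[OF eigen, of "\<lambda>q. poly q x"]
      by (simp add: Omega_coeff_def algebra_simps power2_eq_square)
    then show "poly (adY_coeff lam (int p + 2) (adX_coeff lam (int p + 1) f)) x =
      poly (smult (of_nat k * (of_nat k + 1) - (of_nat p + 1)^2 - (of_nat p + 1)) f) x"
      by simp
  qed
  have coeff: "of_nat k * (of_nat k + 1) - (of_nat p + 1)^2 - (of_nat p + 1) + 2 * (of_nat p + 1)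
      = (of_nat ((j + 1) * (2 * k - j)) :: complex)"
  proof -
    have k: "k = p + j + 1" using assms by (simp add: p_def)
    show ?thesis unfolding k by (simp add: of_nat_diff power2_eq_square algebra_simps)
  qed
  have commute: "adX_coeff lam (int p) f' =
      adY_coeff lam (int p + 2) (adX_coeff lam (int p + 1) f) + smult (2 * of_int (int p + 1)) f"
    using adX_adY_coeff_commutator[of lam "int p + 1" f] by (simp add: f' algebra_simps)
  have XY: "adX_coeff lam (int p) f' = smult (of_nat ((j + 1) * (2 * k - j))) f"
    unfolding commute YX coeff[symmetric] by (rule poly_ext) (simp add: algebra_simps)
  have "adY_iter_norm lam k (Suc j) = tr_poly lam (f' * f' * Tprod lam 1 p)"
    by (simp only: adY_iter_norm_def kj power2_eq_square f'_def)
  also have "\<dots> = tr_poly lam (adY_coeff lam (int p + 1) f * f' * Tprod lam 1 p)"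
    by (subst (1) f') (rule refl)
  also have "\<dots> = tr_poly lam (f * adX_coeff lam (int p) f' * Tprod lam 1 (Suc p))"
    by (rule tr_poly_adY_coeff_adjoint)
  also have "\<dots> = of_nat ((j + 1) * (2 * k - j)) * adY_iter_norm lam k j"
    by (simp add: XY adY_iter_norm_def kj f_def power2_eq_square tr_poly_smult[symmetric])
  finally show ?thesis .
qed

lemma adY_iter_norm_eq:
  assumes "j \<le> k"
  shows "fact (2 * k - j) * adY_iter_norm lam k j = fact j * fact (2 * k) * tr_poly lam (Tprod lam 1 k)"
  using assms
proof (induction j)
  case 0
  then show ?case by (simp add: adY_iter_norm_def)
next
  case (Suc j)
  then have jk: "j < k" by simp
  have "2 * k - j = Suc (2 * k - Suc j)" using jk by simp
  then have fact: "fact (2 * k - j) = (of_nat (2 * k - j) * fact (2 * k - Suc j) :: complex)"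
    by (metis fact_Suc of_nat_mult)
  have "fact (2 * k - Suc j) * adY_iter_norm lam k (Suc j) =
      of_nat (Suc j) * (fact (2 * k - j) * adY_iter_norm lam k j)"
    unfolding adY_iter_norm_Suc[OF jk] fact by (simp only: of_nat_mult Suc_eq_plus1 mult_ac)
  also have "\<dots> = fact (Suc j) * fact (2 * k) * tr_poly lam (Tprod lam 1 k)"
    using Suc jk by simp
  finally show ?case .
qed

text \<open>\<open>T\<^sub>1 \<cdots> T\<^sub>k\<close> splits into the linear factors \<open>(lam - H - 2i - 1)/2\<close> and \<open>(lam + H + 2i + 1)/2\<close>,
  \<open>i < k\<close>. Its trace is then computed like a Beta integral: discrete integration by parts
  (\<^const>\<open>boundary_term\<close> vanishing) moves the factors of the second kind, one at a time, to the
  first kind, and a last summation by parts produces the boundary value \<open>norm_const\<close>.\<close>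

definition Tprod_minus :: "complex \<Rightarrow> nat \<Rightarrow> complex poly" where
  "Tprod_minus lam a = (\<Prod>i<a. [:(lam - 1 - 2 * of_nat i) / 2, - 1/2:])"

definition Tprod_plus :: "complex \<Rightarrow> nat \<Rightarrow> complex poly" where
  "Tprod_plus lam b = (\<Prod>i<b. [:(lam + 1 + 2 * of_nat i) / 2, 1/2:])"

lemma poly_Tprod_minus: "poly (Tprod_minus lam a) x = (\<Prod>i<a. (lam - x - 1 - 2 * of_nat i) / 2)"
  unfolding Tprod_minus_def poly_prod by (intro prod.cong) (simp_all add: field_simps)

lemma poly_Tprod_plus: "poly (Tprod_plus lam b) x = (\<Prod>i<b. (lam + x + 1 + 2 * of_nat i) / 2)"
  unfolding Tprod_plus_def poly_prod by (intro prod.cong) (simp_all add: field_simps)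

lemma Tprod_eq_minus_plus: "Tprod lam 1 k = Tprod_minus lam k * Tprod_plus lam k"
proof (rule poly_ext)
  fix x
  have "poly (Tprod lam 1 k) x = (\<Prod>s<k. (lam^2 - (x + of_int (2 * (1 + int s) - 1))^2) / 4)"
    by (simp add: Tprod_def poly_prod)
  also have "\<dots> = (\<Prod>s<k. ((lam - x - 1 - 2 * of_nat s) / 2) * ((lam + x + 1 + 2 * of_nat s) / 2))"
    by (rule prod.cong) (simp_all add: field_simps power2_eq_square)
  also have "\<dots> = poly (Tprod_minus lam k * Tprod_plus lam k) x"
    by (simp only: prod.distrib poly_mult poly_Tprod_minus poly_Tprod_plus)
  finally show "poly (Tprod lam 1 k) x = poly (Tprod_minus lam k * Tprod_plus lam k) x" .
qed

lemma poly_Tprod_plus_shift: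
  "poly (Tprod_plus lam (Suc b)) (y - 2) =
     poly (Tprod_plus lam (Suc b)) y - of_nat (Suc b) * poly (Tprod_plus lam b) y"
proof -
  let ?h = "\<lambda>i::nat. (lam + y + 1 + 2 * of_nat i) / 2"
  have unshifted: "poly (Tprod_plus lam (Suc b)) y = (\<Prod>i<b. ?h i) * ?h b"
    by (simp add: poly_Tprod_plus)
  have "poly (Tprod_plus lam (Suc b)) (y - 2) =
      (lam + y - 1) / 2 * (\<Prod>i<b. (lam + (y - 2) + 1 + 2 * of_nat (Suc i)) / 2)"
    unfolding poly_Tprod_plus prod.lessThan_Suc_shift by (simp add: algebra_simps)
  also have "(\<Prod>i<b. (lam + (y - 2) + 1 + 2 * of_nat (Suc i)) / 2) = (\<Prod>i<b. ?h i)"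
    by (rule prod.cong) (simp_all add: algebra_simps)
  finally show ?thesis unfolding unshifted poly_Tprod_plus[of lam b y] by (simp add: field_simps)
qed

lemma poly_Tprod_minus_shift:
  "poly (Tprod_minus lam (Suc a)) (y - 2) =
     poly (Tprod_minus lam (Suc a)) y + of_nat (Suc a) * poly (Tprod_minus lam a) y"
proof -
  let ?h = "\<lambda>i::nat. (lam - y - 1 - 2 * of_nat i) / 2"
  have unshifted: "poly (Tprod_minus lam (Suc a)) y = (\<Prod>i<a. ?h i) * ?h a"
    by (simp add: poly_Tprod_minus)
  have "poly (Tprod_minus lam (Suc a)) (y - 2) =
      (lam - y + 1) / 2 * (\<Prod>i<a. (lam - (y - 2) - 1 - 2 * of_nat (Suc i)) / 2)"
    unfolding poly_Tprod_minus prod.lessThan_Suc_shift by (simp add: algebra_simps)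
  also have "(\<Prod>i<a. (lam - (y - 2) - 1 - 2 * of_nat (Suc i)) / 2) = (\<Prod>i<a. ?h i)"
    by (rule prod.cong) (simp_all add: algebra_simps)
  finally show ?thesis unfolding unshifted poly_Tprod_minus[of lam a y] by (simp add: field_simps)
qed

lemma poly_Tprod_minus_root: "c \<le> a \<Longrightarrow> poly (Tprod_minus lam (Suc a)) (lam - 1 - 2 * of_nat c) = 0"
  unfolding poly_Tprod_minus by (rule prod_zero) (auto intro!: bexI[of _ c])

lemma poly_Tprod_plus_root: "poly (Tprod_plus lam (Suc b)) (- lam - 1) = 0"
  unfolding poly_Tprod_plus by (rule prod_zero) (auto intro!: bexI[of _ 0])

definition beta_tr :: "complex \<Rightarrow> nat \<Rightarrow> nat \<Rightarrow> nat \<Rightarrow> complex" where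
  "beta_tr lam a b c = tr_poly lam (shp (- 2 * of_nat c) (Tprod_minus lam a) * Tprod_plus lam b)"

lemma beta_tr_step:
  assumes "c \<le> a"
  shows "of_nat (Suc a) * beta_tr lam a (Suc b) c = of_nat (Suc b) * beta_tr lam (Suc a) b (Suc c)"
proof -
  define P where "P = shp (- 2 * of_nat c) (Tprod_minus lam (Suc a)) * Tprod_plus lam (Suc b)"
  have boundary: "boundary_term lam P = 0"
  proof (cases "lam = 0")
    case True
    have "poly (shp (- 2 * of_nat c) (Tprod_minus lam (Suc a))) (-1) = 0"
      using poly_Tprod_minus_root[OF assms, of lam] True by (simp add: algebra_simps)
    moreover have "poly (Tprod_plus lam (Suc b)) (-1) = 0"
      using poly_Tprod_plus_root[of lam b] True by simp
    ultimately show ?thesis using True by (simp add: boundary_term_def P_def pderiv_mult)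
  next
    case False
    have "poly (shp (- 2 * of_nat c) (Tprod_minus lam (Suc a))) (lam - 1) = 0"
      using poly_Tprod_minus_root[OF assms, of lam] by (simp add: algebra_simps)
    then show ?thesis
      using poly_Tprod_plus_root[of lam b] False by (simp add: boundary_term_def P_def)
  qed
  have eq: "P - shp (-2) P =
      smult (of_nat (Suc b)) (shp (- 2 * of_nat (Suc c)) (Tprod_minus lam (Suc a)) * Tprod_plus lam b)
      - smult (of_nat (Suc a)) (shp (- 2 * of_nat c) (Tprod_minus lam a) * Tprod_plus lam (Suc b))"
    (is "_ = ?rhs")
  proof (rule poly_ext)
    fix x
    have lhs: "poly (P - shp (-2) P) x =
        poly (Tprod_minus lam (Suc a)) (x - 2 * of_nat c) * poly (Tprod_plus lam (Suc b)) x
        - poly (Tprod_minus lam (Suc a)) (x - 2 * of_nat c - 2) * poly (Tprod_plus lam (Suc b)) (x - 2)"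
      by (simp add: P_def algebra_simps)
    have rhs: "poly ?rhs x =
        of_nat (Suc b) * poly (Tprod_minus lam (Suc a)) (x - 2 * of_nat c - 2) * poly (Tprod_plus lam b) x
        - of_nat (Suc a) * poly (Tprod_minus lam a) (x - 2 * of_nat c) * poly (Tprod_plus lam (Suc b)) x"
      by (simp add: algebra_simps)
    show "poly (P - shp (-2) P) x = poly ?rhs x"
      unfolding lhs rhs poly_Tprod_plus_shift poly_Tprod_minus_shift by (simp add: algebra_simps)
  qed
  have "0 = tr_poly lam (P - shp (-2) P)" using tr_poly_backward_difference[of lam P] boundary by simp
  also have "\<dots> = of_nat (Suc b) * beta_tr lam (Suc a) b (Suc c) - of_nat (Suc a) * beta_tr lam a (Suc b) c"
    unfolding eq beta_tr_def by (simp add: tr_poly_diff tr_poly_smult)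
  finally show ?thesis by simp
qed

lemma prod_centered_range:
  fixes z :: "'a :: comm_ring_1"
  shows "(\<Prod>i<Suc (2 * k). z + of_nat k - of_nat i) = z * (\<Prod>j\<in>{1..k}. z^2 - (of_nat j)^2)"
proof (induction k)
  case 0 then show ?case by simp
next
  case (Suc k)
  let ?f = "\<lambda>i::nat. z + of_nat (Suc k) - of_nat i"
  have e: "Suc (2 * Suc k) = Suc (Suc (Suc (2 * k)))" by simp
  have "(\<Prod>i<Suc (2 * Suc k). ?f i) = ?f 0 * (\<Prod>i<Suc (Suc (2 * k)). ?f (Suc i))"
    unfolding e by (rule prod.lessThan_Suc_shift)
  also have "(\<Prod>i<Suc (Suc (2 * k)). ?f (Suc i)) =
      (\<Prod>i<Suc (2 * k). ?f (Suc i)) * ?f (Suc (Suc (2 * k)))"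
    by (rule prod.lessThan_Suc)
  also have "(\<Prod>i<Suc (2 * k). ?f (Suc i)) = (\<Prod>i<Suc (2 * k). z + of_nat k - of_nat i)"
    by (rule prod.cong) simp_all
  also have "\<dots> = z * (\<Prod>j\<in>{1..k}. z^2 - (of_nat j)^2)" by (rule Suc.IH)
  finally have outer: "(\<Prod>i<Suc (2 * Suc k). ?f i) =
      ?f 0 * (z * (\<Prod>j\<in>{1..k}. z^2 - (of_nat j)^2) * ?f (Suc (Suc (2 * k))))" .
  have "{1..Suc k} = insert (Suc k) {1..k}" by auto
  then have squares: "(\<Prod>j\<in>{1..Suc k}. z^2 - (of_nat j)^2) =
      (\<Prod>j\<in>{1..k}. z^2 - (of_nat j)^2) * (z^2 - (of_nat (Suc k))^2)"
    by (simp add: mult.commute)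
  have ends: "?f 0 * ?f (Suc (Suc (2 * k))) = z^2 - (of_nat (Suc k))^2"
    by (simp add: algebra_simps power2_eq_square)
  show ?case unfolding outer squares ends[symmetric] by (simp only: mult_ac)
qed

lemma prod_neg_squares: "(\<Prod>j\<in>{1..k}. - ((of_nat j)^2) :: complex) = (-1)^k * fact k ^ 2"
proof (induction k)
  case (Suc k)
  have "{1..Suc k} = insert (Suc k) {1..k}" by auto
  then show ?case using Suc by (simp add: algebra_simps power2_eq_square)
qed simp

lemma two_of_nat_plus_one_neq_0: "(2 * of_nat k + 1 :: 'a :: semiring_char_0) \<noteq> 0"
proof -
  have "(2 * of_nat k + 1 :: 'a) = of_nat (2 * k + 1)" by (simp add: add.commute)
  then show ?thesis by (simp only: of_nat_eq_0_iff)
qed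

definition norm_const :: "complex \<Rightarrow> nat \<Rightarrow> complex" where
  "norm_const lam k =
     (if lam \<noteq> 0 then lam * (\<Prod>j\<in>{1..k}. lam^2 - (of_nat j)^2) else (-1)^k * fact k ^ 2)"

lemma boundary_term_Tprod_minus:
  "boundary_term lam (shp (- 2 * of_nat k) (Tprod_minus lam (Suc (2 * k)))) = - norm_const lam k"
proof -
  define P where "P = shp (- 2 * of_nat k) (Tprod_minus lam (Suc (2 * k)))"
  show ?thesis
    unfolding P_def[symmetric]
  proof (cases "lam = 0")
    case False
    have root: "poly P (lam - 1) = 0"
      using poly_Tprod_minus_root[of k "2 * k" lam] by (simp add: P_def algebra_simps)
    have "poly P (- lam - 1) = (\<Prod>i<Suc (2 * k). lam + of_nat k - of_nat i)"
      unfolding P_def poly_shp poly_Tprod_minus by (rule prod.cong) (simp_all add: field_simps)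
    also have "\<dots> = lam * (\<Prod>j\<in>{1..k}. lam^2 - (of_nat j)^2)" by (rule prod_centered_range)
    finally show "boundary_term lam P = - norm_const lam k"
      using root False by (simp add: boundary_term_def norm_const_def)
  next
    case True
    define A where "A = ([:- 1/2, - 1/2:] :: complex poly)"
    define R where "R = (\<Prod>j\<in>{1..k}. A^2 - [:(of_nat j)^2:])"
    have PAR: "P = A * R"
    proof (rule poly_ext)
      fix x :: complex
      let ?z = "- (x + 1) / 2"
      have "poly P x = (\<Prod>i<Suc (2 * k). ?z + of_nat k - of_nat i)"
        unfolding P_def poly_shp poly_Tprod_minus using True by (intro prod.cong) (simp_all add: field_simps)
      also have "\<dots> = ?z * (\<Prod>j\<in>{1..k}. ?z^2 - (of_nat j)^2)" by (rule prod_centered_range)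
      also have "\<dots> = poly (A * R) x"
        by (simp add: A_def R_def poly_prod field_simps)
      finally show "poly P x = poly (A * R) x" .
    qed
    have "poly R (-1) = (-1)^k * fact k ^ 2"
      unfolding R_def poly_prod by (simp add: A_def prod_neg_squares[symmetric])
    moreover have "poly (pderiv P) (-1) = poly R (-1) * (- 1/2)"
    proof -
      have "poly A (-1) = 0" "pderiv A = [:- 1/2:]"
        by (simp_all add: A_def pderiv_pCons)
      then show ?thesis unfolding PAR pderiv_mult poly_add poly_mult by simp
    qed
    ultimately show "boundary_term lam P = - norm_const lam k"
      using True by (simp add: boundary_term_def norm_const_def)
  qed
qed

lemma beta_tr_final: "(2 * of_nat k + 1) * beta_tr lam (2 * k) 0 k = norm_const lam k"
proof -
  define P where "P = shp (- 2 * of_nat k) (Tprod_minus lam (Suc (2 * k)))"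
  have "P - shp (-2) P = smult (- (2 * of_nat k + 1)) (shp (- 2 * of_nat k) (Tprod_minus lam (2 * k)))"
  proof (rule poly_ext)
    fix x
    have "poly (P - shp (-2) P) x = poly (Tprod_minus lam (Suc (2 * k))) (x - 2 * of_nat k)
          - poly (Tprod_minus lam (Suc (2 * k))) (x - 2 * of_nat k - 2)"
      by (simp add: P_def algebra_simps)
    then show "poly (P - shp (-2) P) x =
        poly (smult (- (2 * of_nat k + 1)) (shp (- 2 * of_nat k) (Tprod_minus lam (2 * k)))) x"
      unfolding poly_Tprod_minus_shift by (simp add: algebra_simps)
  qed
  moreover have "boundary_term lam P = - norm_const lam k"
    unfolding P_def by (rule boundary_term_Tprod_minus)
  ultimately have "- (2 * of_nat k + 1) * beta_tr lam (2 * k) 0 k = - norm_const lam k"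
    using tr_poly_backward_difference[of lam P] by (simp add: beta_tr_def tr_poly_smult Tprod_plus_def)
  then show ?thesis by (simp add: algebra_simps)
qed

lemma beta_tr_iter:
  assumes "j \<le> k"
  shows "fact (k + j) * fact (k - j) * beta_tr lam k k 0 = fact k ^ 2 * beta_tr lam (k + j) (k - j) j"
  using assms
proof (induction j)
  case 0
  then show ?case by (simp add: power2_eq_square)
next
  case (Suc j)
  have jk: "j < k" using Suc.prems by simp
  have kj: "k - j = Suc (k - Suc j)" using jk by simp
  have step: "of_nat (Suc (k + j)) * beta_tr lam (k + j) (k - j) j =
      of_nat (k - j) * beta_tr lam (k + Suc j) (k - Suc j) (Suc j)"
    using beta_tr_step[of j "k + j" lam "k - Suc j"] kj by simp
  have f1: "(fact (k + Suc j) :: complex) = of_nat (Suc (k + j)) * fact (k + j)" by simp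
  have f2: "(fact (k - j) :: complex) = of_nat (k - j) * fact (k - Suc j)"
    by (simp only: kj fact_Suc of_nat_mult)
  have "of_nat (k - j) * (fact (k + Suc j) * fact (k - Suc j) * beta_tr lam k k 0)
      = of_nat (Suc (k + j)) * (fact (k + j) * fact (k - j) * beta_tr lam k k 0)"
    unfolding f1 f2 by (simp add: algebra_simps)
  also have "\<dots> = of_nat (Suc (k + j)) * (fact k ^ 2 * beta_tr lam (k + j) (k - j) j)"
    using Suc.IH jk by simp
  also have "\<dots> = of_nat (k - j) * (fact k ^ 2 * beta_tr lam (k + Suc j) (k - Suc j) (Suc j))"
    using step by (simp add: algebra_simps)
  finally show ?case using jk by simp
qed

lemma tr_poly_Tprod:
  "fact (2 * k) * (2 * of_nat k + 1) * tr_poly lam (Tprod lam 1 k) = fact k ^ 2 * norm_const lam k"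
proof -
  have "beta_tr lam k k 0 = tr_poly lam (Tprod lam 1 k)"
    by (simp add: beta_tr_def Tprod_eq_minus_plus)
  then have "fact (2 * k) * tr_poly lam (Tprod lam 1 k) = fact k ^ 2 * beta_tr lam (2 * k) 0 k"
    using beta_tr_iter[of k k lam] by (simp add: mult_2)
  then have "fact (2 * k) * (2 * of_nat k + 1) * tr_poly lam (Tprod lam 1 k) =
      fact k ^ 2 * ((2 * of_nat k + 1) * beta_tr lam (2 * k) 0 k)"
    by (simp add: ac_simps)
  then show ?thesis
    by (simp only: beta_tr_final)
qed

lemma norm_const_neq_0:
  assumes "lam \<notin> \<int> - {0}"
  shows "norm_const lam k \<noteq> 0"
proof (cases "lam = 0")
  case True
  then show ?thesis by (simp add: norm_const_def)
next
  case False
  then have "lam \<notin> \<int>" using assms by blast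
  have "lam^2 - (of_nat j)^2 \<noteq> 0" for j :: nat
  proof
    assume "lam^2 - (of_nat j)^2 = 0"
    then have "(lam - of_nat j) * (lam + of_nat j) = 0" by (simp add: algebra_simps power2_eq_square)
    then have "lam = of_nat j \<or> lam = - of_nat j" by (auto simp: add_eq_0_iff)
    then have "lam \<in> \<int>" by (auto intro: Ints_of_nat Ints_minus)
    with \<open>lam \<notin> \<int>\<close> show False by simp
  qed
  then show ?thesis using False by (simp add: norm_const_def)
qed

lemma adY_iter_norm_neq_0:
  assumes "lam \<notin> \<int> - {0}" and "j \<le> k"
  shows "adY_iter_norm lam k j \<noteq> 0"
proof
  assume "adY_iter_norm lam k j = 0"
  then have "tr_poly lam (Tprod lam 1 k) = 0"
    using adY_iter_norm_eq[OF assms(2), of lam] by simp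
  then show False
    using tr_poly_Tprod[of k lam] norm_const_neq_0[OF assms(1)] by simp
qed

lemma tr_pairing_adY_iter:
  assumes "m \<le> k"
  shows "tr_pairing lam (int m) (adY_iter lam k (k - m)) (adY_iter lam k (k + m)) =
           (-1)^m * adY_iter_norm lam k k"
  using assms
proof (induction m)
  case 0
  then show ?case by (simp add: tr_pairing_def adY_iter_norm_def power2_eq_square)
next
  case (Suc m)
  then have mk: "m < k" by simp
  then have "k - m = Suc (k - Suc m)" "int k - int (k - Suc m) = int m + 1" by simp_all
  then have down: "adY_iter lam k (k - m) = adY_coeff lam (int m + 1) (adY_iter lam k (k - Suc m))"
    by (simp add: algebra_simps)
  have up: "adY_iter lam k (k + Suc m) = adY_coeff lam (- int m) (adY_iter lam k (k + m))"
    by simp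
  have "tr_pairing lam (int m) (adY_iter lam k (k - m)) (adY_iter lam k (k + m)) =
      - tr_pairing lam (int m + 1) (adY_iter lam k (k - Suc m)) (adY_iter lam k (k + Suc m))"
    unfolding down up
    using tr_pairing_adY[of lam "int m + 1" "adY_iter lam k (k - Suc m)" "adY_iter lam k (k + m)"]
    by simp
  then show ?case
    using Suc.IH mk by (simp add: add.commute)
qed

lemma gl_mono_neq_zero: "f \<noteq> 0 \<Longrightarrow> gl_mono n f \<noteq> gl_zero"
  by (metis gl_mono_same gl_zero_def)

text \<open>For \<open>l < 0\<close>, the pairing of \<open>e\<^sub>k\<^sub>,\<^sub>-\<^sub>l\<close> with \<open>e\<^sub>k\<^sub>l\<close> is \<open>\<plusminus>\<langle>f\<^sub>k\<^sub>0, f\<^sub>k\<^sub>0\<rangle>\<^sub>0 \<noteq> 0\<close>.\<close>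

lemma ekl_neq_zero:
  assumes "lam \<notin> \<int> - {0}" and "\<bar>l\<bar> \<le> int k"
  shows "ekl lam k l \<noteq> gl_zero"
proof (cases "l \<ge> 0")
  case True
  then have "nat (int k - l) \<le> k" by simp
  then have "adY_iter_norm lam k (nat (int k - l)) \<noteq> 0"
    by (rule adY_iter_norm_neq_0[OF assms(1)])
  then have "adY_iter lam k (nat (int k - l)) \<noteq> 0"
    by (auto simp: adY_iter_norm_def)
  then show ?thesis unfolding ekl_eq_gl_mono[OF assms(2)] by (rule gl_mono_neq_zero)
next
  case False
  define m where "m = nat (- l)"
  have mk: "m \<le> k" using assms(2) False by (simp add: m_def)
  have "tr_pairing lam (int m) (adY_iter lam k (k - m)) (adY_iter lam k (k + m)) \<noteq> 0"
    unfolding tr_pairing_adY_iter[OF mk] using adY_iter_norm_neq_0[OF assms(1), of k k] by simp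
  then have "adY_iter lam k (k + m) \<noteq> 0" by (auto simp: tr_pairing_def)
  moreover have "nat (int k - l) = k + m" using False by (simp add: m_def)
  ultimately show ?thesis unfolding ekl_eq_gl_mono[OF assms(2)] by (simp add: gl_mono_neq_zero)
qed

lemma fkl_norm:
  assumes "l \<le> k"
  shows "tr_poly lam (fkl lam k l ^ 2 * (\<Prod>i\<in>{1..l}. Tp lam (int i))) =
          (if lam \<noteq> 0
           then fact (k - l) / fact (k + l) * (fact k ^ 2 / (2 * of_nat k + 1))
                  * lam * (\<Prod>j\<in>{1..k}. lam^2 - of_nat j ^ 2)
           else (-1) ^ k * (fact (k - l) / fact (k + l)) * (fact k ^ 4 / (2 * of_nat k + 1)))"
proof -
  have kl: "k - (k - l) = l" "2 * k - (k - l) = k + l" using assms by simp_all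
  have norm: "tr_poly lam (fkl lam k l ^ 2 * (\<Prod>i\<in>{1..l}. Tp lam (int i))) = adY_iter_norm lam k (k - l)"
    unfolding adY_iter_norm_def fkl_eq_adY_iter[OF assms] prod_Tp_eq_Tprod kl by simp
  have "fact (k + l) * adY_iter_norm lam k (k - l) = fact (k - l) * fact (2 * k) * tr_poly lam (Tprod lam 1 k)"
    using adY_iter_norm_eq[of "k - l" k lam] kl by simp
  then have "(2 * of_nat k + 1) * (fact (k + l) * adY_iter_norm lam k (k - l)) =
      fact (k - l) * (fact (2 * k) * (2 * of_nat k + 1) * tr_poly lam (Tprod lam 1 k))"
    by (simp add: ac_simps)
  also have "\<dots> = fact (k - l) * fact k ^ 2 * norm_const lam k"
    by (simp add: tr_poly_Tprod)
  finally have "((2 * of_nat k + 1) * fact (k + l)) * adY_iter_norm lam k (k - l) =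
      fact (k - l) * fact k ^ 2 * norm_const lam k"
    by (simp only: mult.assoc)
  moreover have "(2 * of_nat k + 1) * fact (k + l) \<noteq> (0 :: complex)"
    using two_of_nat_plus_one_neq_0[of k] by simp
  ultimately have "adY_iter_norm lam k (k - l) =
      fact (k - l) * fact k ^ 2 * norm_const lam k / ((2 * of_nat k + 1) * fact (k + l))"
    by (simp add: nonzero_eq_divide_eq ac_simps)
  moreover have "(fact k ^ 4 :: complex) = fact k ^ 2 * fact k ^ 2"
    by (simp flip: power_add)
  ultimately show ?thesis
    unfolding norm by (simp add: norm_const_def ac_simps)
qed

theorem theorem9p2:
  fixes lam :: complex
  assumes hlam: "lam \<notin> \<int> - {0}"
  shows
    "(\<forall>u\<in>gl_carrier. \<forall>v\<in>gl_carrier.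
        gl_tr lam (gl_mult lam (Omega_ad lam u) v) = gl_tr lam (gl_mult lam u (Omega_ad lam v)))
   \<and> (\<forall>(k::nat) (l::int). \<bar>l\<bar> \<le> int k \<longrightarrow>
        ekl lam k l \<noteq> gl_zero \<and>
        Omega_ad lam (ekl lam k l) = gl_scale (2 * of_nat k * (of_nat k + 1)) (ekl lam k l))
   \<and> (\<forall>(k::nat) (l::nat). l \<le> k \<longrightarrow>
        ekl lam k (int l) = gl_mono (int l) (fkl lam k l)
      \<and> Tp lam 0 * nabla_op (delta_op (fkl lam k l))
          - smult (of_nat (l + 1)) ([:of_nat l, 1:] * delta_op (fkl lam k l))
          + smult (of_nat ((k - l) * (k + l + 1))) (fkl lam k l) = 0
      \<and> fkl lam k l * (\<Prod>i\<in>{1..l}. Tp lam (int i))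
          = (nabla_op ^^ (k - l)) (\<Prod>i\<in>{1..k}. Tp lam (int i)))
   \<and> (\<forall>(k::nat) (l::nat). l \<le> k \<longrightarrow>
        tr_poly lam (fkl lam k l ^ 2 * (\<Prod>i\<in>{1..l}. Tp lam (int i))) =
          (if lam \<noteq> 0
           then fact (k - l) / fact (k + l) * (fact k ^ 2 / (2 * of_nat k + 1))
                  * lam * (\<Prod>j\<in>{1..k}. lam^2 - of_nat j ^ 2)
           else (-1) ^ k * (fact (k - l) / fact (k + l)) * (fact k ^ 4 / (2 * of_nat k + 1))))"
  by (intro conjI allI impI ballI)
    (assumption | rule Omega_ad_self_adjoint ekl_neq_zero[OF hlam] Omega_ad_ekl ekl_eq_gl_mono_fkl
      fkl_difference_equation fkl_mult_prod_Tp fkl_norm)+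

end
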